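(* Consider problem (P): minimize $F(\mathbf{x})=\mathbf{A}\otimes\mathbf{x}$ over $\mathbf{x}\in\mathcal{X}$, under the standing assumptions stated in the context. If (P) is solvable, then: (i) every entry $b_i$ ($i=1,\dots,m$) of the vector $\mathbf{b}$ defined in the context is a real number (i.e. $b_i\neq-\infty$); (ii) every entry $x^*_j(\mathbf{A},\mathbf{b})$ ($j=1,\dots,n$) of the vector $\mathbf{x}^*(\mathbf{A},\mathbf{b})$ defined in the context is a real number (i.e. neither $-\infty$ nor $+\infty$).
   Context: Max-plus algebra: $\mathbb{R}_{\max}=\mathbb{R}\cup\{-\infty\}$ with $a\oplus b=\max\{a,b\}$ and $a\otimes b=a+b$; $\varepsilon=-\infty$. For $\mathbf{A}=(a_{ij})\in\mathbb{R}_{\max}^{m\times n}$ and $\mathbf{x}=(x_j)\in\mathbb{R}^n$, $\mathbf{A}\otimes\mathbf{x}$ is the vector with $i$th component $F_i(\mathbf{x})=\max_{1\le j\le n}(a_{ij}+x_j)$, with $r+(-\infty)=-\infty$. Vectors are compared componentwise. Problem (P): given $\mathbf{A}=(a_{ij})\in\mathbb{R}_{\max}^{m\times n}$, reals $k_1,\dots,k_n\ge 0$ not all zero, and $c\in\mathbb{R}$, let $\mathcal{X}=\{\mathbf{x}\in\mathbb{R}^n : \sum_{j=1}^n k_jx_j=c\}$ and $F(\mathbf{x})=\mathbf{A}\otimes\mathbf{x}$. A point $\tilde{\mathbf{x}}\in\mathcal{X}$ is a globally optimal solution of (P) if $F(\mathbf{x})\ge F(\tilde{\mathbf{x}})$ componentwise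 for every $\mathbf{x}\in\mathcal{X}$; (P) is solvable if a globally optimal solution exists. Standing assumptions: (1) no row of $\mathbf{A}$ consists entirely of $-\infty$ entries; (2) if the $j$th column of $\mathbf{A}$ consists entirely of $-\infty$ entries, then $k_j>0$. Let $\mathcal{J}=\{j : k_j>0\}$. Define $\mathbf{b}=(b_i)$ by $b_i=-\infty$ if $a_{ij}=-\infty$ for some $j\in\mathcal{J}$, and otherwise $b_i=\frac{\sum_{j\in\mathcal{J}}k_ja_{ij}+c}{\sum_{j\in\mathcal{J}}k_j}$. Define $\mathbf{x}^*(\mathbf{A},\mathbf{b})=(x^*_j(\mathbf{A},\mathbf{b}))$ by $x^*_j(\mathbf{A},\mathbf{b})=\min_{1\le i\le m}(b_i-a_{ij})$, with the conventions, for $r\in\mathbb{R}$: $r-(-\infty)=+\infty$, $(-\infty)-r=-\infty$, $(-\infty)-(-\infty)=+\infty$; thus $x^*_j(\mathbf{A},\mathbf{b})\in\mathbb{R}\cup\{-\infty,+\infty\}$. *)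

theory Defs
  imports "HOL-Analysis.Analysis"
begin

text \<open>Entries of A lie in R_max = R \<union> {-\<infinity>}, modelled in ereal
 (the hypothesis that no entry is +\<infinity> is stated in the theorem).\<close>

definition mp_F :: "(nat \<Rightarrow> nat \<Rightarrow> ereal) \<Rightarrow> nat \<Rightarrow> (nat \<Rightarrow> real) \<Rightarrow> nat \<Rightarrow> ereal" where
  "mp_F A n x i = Max ((\<lambda>j. A i j + ereal (x j)) ` {1..n})"

definition mp_feasible :: "nat \<Rightarrow> (nat \<Rightarrow> real) \<Rightarrow> real \<Rightarrow> (nat \<Rightarrow> real) \<Rightarrow> bool" where
  "mp_feasible n k c x \<longleftrightarrow> (\<Sum>j\<in>{1..n}. k j * x j) = c"

definition mp_global_opt ::
  "(nat \<Rightarrow> nat \<Rightarrow> ereal) \<Rightarrow> nat \<Rightarrow> nat \<Rightarrow> (nat \<Rightarrow> real) \<Rightarrow> real \<Rightarrow> (nat \<Rightarrow> real) \<Rightarrow> bool" where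
  "mp_global_opt A m n k c xt \<longleftrightarrow> mp_feasible n k c xt \<and>
     (\<forall>x. mp_feasible n k c x \<longrightarrow> (\<forall>i\<in>{1..m}. mp_F A n x i \<ge> mp_F A n xt i))"

definition mp_solvable :: "(nat \<Rightarrow> nat \<Rightarrow> ereal) \<Rightarrow> nat \<Rightarrow> nat \<Rightarrow> (nat \<Rightarrow> real) \<Rightarrow> real \<Rightarrow> bool" where
  "mp_solvable A m n k c \<longleftrightarrow> (\<exists>xt. mp_global_opt A m n k c xt)"

definition mp_J :: "nat \<Rightarrow> (nat \<Rightarrow> real) \<Rightarrow> nat set" where
  "mp_J n k = {j\<in>{1..n}. k j > 0}"

definition mp_b :: "(nat \<Rightarrow> nat \<Rightarrow> ereal) \<Rightarrow> nat \<Rightarrow> (nat \<Rightarrow> real) \<Rightarrow> real \<Rightarrow> nat \<Rightarrow> ereal" where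
  "mp_b A n k c i =
     (if \<exists>j\<in>mp_J n k. A i j = -\<infinity> then -\<infinity>
      else ereal (((\<Sum>j\<in>mp_J n k. k j * real_of_ereal (A i j)) + c) / (\<Sum>j\<in>mp_J n k. k j)))"

text \<open>Residuation subtraction with the paper's conventions:
 r - (-\<infinity>) = +\<infinity>, (-\<infinity>) - r = -\<infinity>, (-\<infinity>) - (-\<infinity>) = +\<infinity>.\<close>
definition mp_minus :: "ereal \<Rightarrow> ereal \<Rightarrow> ereal" where
  "mp_minus a b = (if b = -\<infinity> then \<infinity> else a - b)"

definition mp_xstar :: "(nat \<Rightarrow> nat \<Rightarrow> ereal) \<Rightarrow> nat \<Rightarrow> (nat \<Rightarrow> ereal) \<Rightarrow> nat \<Rightarrow> ereal" where
  "mp_xstar A m b j = (INF i\<in>{1..m}. mp_minus (b i) (A i j))"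

end

theory Submission
  imports Defs
begin

text \<open>If some \<open>a\<^sub>i\<^sub>j\<^sub>0 = -\<infinity>\<close> with \<open>k\<^sub>j\<^sub>0 > 0\<close>, the constraint can be kept while \<open>x\<^sub>j\<^sub>0\<close> is raised
  and all other coordinates are lowered without bound; since \<open>x\<^sub>j\<^sub>0\<close> does not enter \<open>F\<^sub>i\<close>,
  this drives \<open>F\<^sub>i\<close> below its value at any optimum, which is finite because row \<open>i\<close> has a
  finite entry. Hence every \<open>b\<^sub>i\<close> is real, and every \<open>x\<^sup>*\<^sub>j\<close> is a minimum of values that are
  real or \<open>+\<infinity>\<close>, at least one of them real because column \<open>j\<close> either has a finite entry
  or lies in \<open>\<J>\<close>.\<close>

lemma mp_F_ge:
  assumes "l \<in> {1..n}"
  shows "A i l + ereal (x l) \<le> mp_F A n x i"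
  unfolding mp_F_def using assms by (intro Max_ge) auto

lemma mp_F_le:
  assumes "1 \<le> n" and "\<And>l. l \<in> {1..n} \<Longrightarrow> A i l + ereal (x l) \<le> B"
  shows "mp_F A n x i \<le> B"
  unfolding mp_F_def using assms by (intro Max.boundedI) auto

lemma ereal_bounded_above_finite:
  assumes "finite S" and "\<And>l. l \<in> S \<Longrightarrow> f l \<noteq> \<infinity>"
  shows "\<exists>U. \<forall>l\<in>S. f l \<le> ereal U"
proof (intro exI ballI)
  fix l assume l: "l \<in> S"
  show "f l \<le> ereal (\<Sum>j\<in>S. abs (real_of_ereal (f j)))"
  proof (cases "f l")
    case (real r)
    have "r \<le> abs (real_of_ereal (f l))" using real by simp
    also have "\<dots> \<le> (\<Sum>j\<in>S. abs (real_of_ereal (f j)))"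
      using assms(1) l by (intro member_le_sum) (auto simp: real_of_ereal_pos)
    finally show ?thesis using real by simp
  qed (use assms(2) l in auto)
qed

lemma mp_feasible_const_off:
  assumes "j0 \<in> {1..n}" and "k j0 \<noteq> 0"
  shows "\<exists>x. mp_feasible n k c x \<and> (\<forall>l. l \<noteq> j0 \<longrightarrow> x l = s)"
proof (intro exI conjI allI impI)
  define S where "S = (\<Sum>l\<in>{1..n}-{j0}. k l)"
  define x where "x = (\<lambda>l. if l = j0 then (c - s * S) / k j0 else s)"
  have "(\<Sum>l\<in>{1..n}. k l * x l) = k j0 * x j0 + (\<Sum>l\<in>{1..n}-{j0}. k l * s)"
    using assms(1) by (simp add: sum.remove x_def)
  also have "\<dots> = c"
    using assms(2) by (simp add: x_def S_def sum_distrib_left mult.commute)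
  finally show "mp_feasible n k c x" unfolding mp_feasible_def .
  show "x l = s" if "l \<noteq> j0" for l using that by (simp add: x_def)
qed

lemma mp_F_unbounded_below:
  assumes j0: "j0 \<in> {1..n}" "k j0 \<noteq> 0" "A i j0 = -\<infinity>"
    and row_finite: "\<And>l. l \<in> {1..n} \<Longrightarrow> A i l \<noteq> \<infinity>"
  shows "\<exists>x. mp_feasible n k c x \<and> mp_F A n x i < ereal R"
proof -
  obtain U where U: "\<And>l. l \<in> {1..n} \<Longrightarrow> A i l \<le> ereal U"
    using ereal_bounded_above_finite[of "{1..n}" "A i"] row_finite by blast
  obtain x where x: "mp_feasible n k c x" "\<And>l. l \<noteq> j0 \<Longrightarrow> x l = R - U - 1"
    using mp_feasible_const_off[of j0 n k, OF j0(1,2)] by blast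
  have "mp_F A n x i \<le> ereal (R - 1)"
  proof (rule mp_F_le)
    show "1 \<le> n" using j0(1) by simp
    fix l assume l: "l \<in> {1..n}"
    show "A i l + ereal (x l) \<le> ereal (R - 1)"
    proof (cases "l = j0")
      case False
      have "A i l + ereal (x l) \<le> ereal U + ereal (x l)"
        using U[OF l] by (rule add_right_mono)
      then show ?thesis using x(2)[OF False] by simp
    qed (use j0(3) in simp)
  qed
  also have "\<dots> < ereal R" by simp
  finally show ?thesis using x(1) by blast
qed

lemma mp_global_opt_no_neg_inf:
  assumes opt: "mp_global_opt A m n k c xt"
    and i: "i \<in> {1..m}"
    and row_finite: "\<And>l. l \<in> {1..n} \<Longrightarrow> A i l \<noteq> \<infinity>"
    and row_nontrivial: "\<exists>l\<in>{1..n}. A i l \<noteq> -\<infinity>"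
    and j0: "j0 \<in> {1..n}" "k j0 \<noteq> 0"
  shows "A i j0 \<noteq> -\<infinity>"
proof
  assume "A i j0 = -\<infinity>"
  obtain l a where l: "l \<in> {1..n}" "A i l = ereal a"
    using row_nontrivial row_finite by (metis ereal_cases)
  obtain x where x: "mp_feasible n k c x" "mp_F A n x i < ereal (a + xt l)"
    using mp_F_unbounded_below[of j0 n k A i, OF j0 \<open>A i j0 = -\<infinity>\<close> row_finite] by blast
  have "ereal (a + xt l) \<le> mp_F A n xt i"
    using mp_F_ge[OF l(1), of A i xt] l(2) by simp
  also have "\<dots> \<le> mp_F A n x i"
    using opt x(1) i unfolding mp_global_opt_def by blast
  finally show False using x(2) by simp
qed

lemma ereal_INF_real:
  assumes "finite S" and "\<And>i. i \<in> S \<Longrightarrow> f i \<noteq> -\<infinity>" and "i1 \<in> S" "f i1 \<noteq> \<infinity>"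
  shows "\<exists>r. (INF i\<in>S. f i) = ereal r"
proof -
  have INF_Min: "(INF i\<in>S. f i) = Min (f ` S)"
    using assms(1,3) by (intro cInf_eq_Min) auto
  obtain i0 where i0: "i0 \<in> S" "Min (f ` S) = f i0"
    using Min_in[of "f ` S"] assms(1,3) by blast
  have "f i0 \<le> f i1"
    using i0(2) assms(1,3) by (metis Min_le finite_imageI imageI)
  then have "f i0 \<noteq> \<infinity>" using assms(4) by auto
  moreover have "f i0 \<noteq> -\<infinity>" using assms(2) i0(1) .
  ultimately show ?thesis using INF_Min i0(2) by (cases "f i0") auto
qed

theorem lemma2:
  fixes A :: "nat \<Rightarrow> nat \<Rightarrow> ereal" and m n :: nat and k :: "nat \<Rightarrow> real" and c :: real
  assumes m_pos: "1 \<le> m"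
    and A_rmax: "\<forall>i\<in>{1..m}. \<forall>j\<in>{1..n}. A i j \<noteq> \<infinity>"
    and k_nonneg: "\<forall>j\<in>{1..n}. k j \<ge> 0"
    and k_nonzero: "\<exists>j\<in>{1..n}. k j \<noteq> 0"
    and rows: "\<forall>i\<in>{1..m}. \<exists>j\<in>{1..n}. A i j \<noteq> -\<infinity>"
    and cols: "\<forall>j\<in>{1..n}. (\<forall>i\<in>{1..m}. A i j = -\<infinity>) \<longrightarrow> k j > 0"
    and solv: "mp_solvable A m n k c"
  shows "(\<forall>i\<in>{1..m}. \<exists>r::real. mp_b A n k c i = ereal r) \<and>
         (\<forall>j\<in>{1..n}. \<exists>r::real. mp_xstar A m (mp_b A n k c) j = ereal r)"
proof -
  obtain xt where opt: "mp_global_opt A m n k c xt"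
    using solv unfolding mp_solvable_def by blast
  have J_finite: "A i j \<noteq> -\<infinity>" if "i \<in> {1..m}" "j \<in> mp_J n k" for i j
    using mp_global_opt_no_neg_inf[OF opt] that A_rmax rows unfolding mp_J_def by auto
  have b_real: "\<exists>r. mp_b A n k c i = ereal r" if "i \<in> {1..m}" for i
    using J_finite[OF that] unfolding mp_b_def by auto
  have "\<exists>r. mp_xstar A m (mp_b A n k c) j = ereal r" if j: "j \<in> {1..n}" for j
  proof -
    obtain i1 where i1: "i1 \<in> {1..m}" "A i1 j \<noteq> -\<infinity>"
      using J_finite[of 1 j] cols j m_pos unfolding mp_J_def by fastforce
    show ?thesis
      unfolding mp_xstar_def
    proof (rule ereal_INF_real[OF _ _ i1(1)])
      show "mp_minus (mp_b A n k c i) (A i j) \<noteq> -\<infinity>" if "i \<in> {1..m}" for i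
        using b_real[OF that] A_rmax that j by (cases "A i j") (auto simp: mp_minus_def)
      show "mp_minus (mp_b A n k c i1) (A i1 j) \<noteq> \<infinity>"
        using b_real[OF i1(1)] A_rmax i1 j by (cases "A i1 j") (auto simp: mp_minus_def)
    qed simp
  qed
  with b_real show ?thesis by blast
qed

end
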